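(* Let $M\ge 3$ be an integer (the number of telescopes), let $0<\epsilon<1$, and let the coherence parameters $g_{XY}=a_{XY}+ib_{XY}\in\mathbb{C}$ ($X<Y$) be such that the state $\rho$ below is a density operator. Fix a pair of telescopes $X\neq Y$ and a phase $\delta\in\mathbb{R}$ with $|\mathrm{Re}(g_{XY}e^{-i\delta})|<1$. For any number of rounds $D\ge 1$ and any strengths $\tau_1,\dots,\tau_D\in[0,1]$ with $\gamma_D>0$, the Fisher information matrices (for the two real parameters $(a_{XY},b_{XY})$) of the quantum-randomness scheme and of the classical-randomness scheme satisfy $$F^{qr}_{XY}=\binom{M}{2}\gamma_D\,F^{cr}_{XY},\qquad\text{hence}\qquad \frac{\Vert F^{qr}_{XY}\Vert}{\Vert F^{cr}_{XY}\Vert}=\binom{M}{2}\gamma_D .$$ Moreover, with the strengths $\tau_1,\dots,\tau_D$ chosen optimally, $\gamma_D\to\frac{1}{M-1}$ as $D\to\infty$, so that the ratio tends to $\frac{1}{M-1}\binom{M}{2}=\frac{M}{2}$.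
   Context: Each telescope $j\in\{1,\dots,M\}$ holds one optical mode, truncated to a qubit with basis $|0\rangle_j$ (vacuum) and $|1\rangle_j$ (one photon). The received stellar state (to first order in the mean photon number $\epsilon$) is $\rho=(1-\epsilon)|0\cdots0\rangle\langle0\cdots0|+\epsilon\rho^{(1)}$, where $\rho^{(1)}$ is supported on the single-photon states $|e_j\rangle$ (photon at telescope $j$, vacuum elsewhere) with $\langle e_j|\rho^{(1)}|e_j\rangle=1/M$, $\langle e_j|\rho^{(1)}|e_k\rangle=g_{jk}/M$ for $j<k$, and $\langle e_k|\rho^{(1)}|e_j\rangle=g_{jk}^*/M$. For the pair $X,Y$, write $|10\rangle_{XY}$ for one photon at $X$ and none at $Y$, etc., and let $|\delta_\pm\rangle_{XY}=\frac{1}{\sqrt2}(|01\rangle\pm e^{i\delta}|10\rangle)_{XY}$; $\overline{XY}$ denotes the remaining $M-2$ telescopes. The Fisher information matrix of a family of outcome probabilities $p(x|\mathbf c)$ with respect to real parameters $\mathbf c=(c_1,c_2)$ is $F_{ij}=\sum_x \frac{1}{p(x|\mathbf c)}\partial_{c_i}p(x|\mathbf c)\,\partial_{c_j}p(x|\mathbf c)$, with $p(x|\mathbf c)=\mathrm{tr}(E_x\rho)$ and the sum taken over the outcomes listed below (the outcomes relevant to $g_{XY}$). Classical-randomness scheme: a uniformly random pair of telescopes receives an entangled dual-rail photon and performs the Gottesman–Jennewein–Croke interferometric measurement; its relevant POVM elements for the pair $XY$ are $E^{\pm}_{XY}=\frac{1}{2\binom{M}{2}}|\delta_\pm\rangle\langle\delta_\pm|_{XY}\otimes\mathbb{I}_{\overline{XY}}$,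 and $F^{cr}_{XY}$ is the Fisher information matrix for $(a_{XY},b_{XY})$ from these two outcomes. Quantum-randomness scheme: before distributing the entangled photon, in each round $r=1,\dots,D$ every telescope applies the local weak measurement with Kraus operators (in the basis $|0\rangle,|1\rangle$) $M_0=\mathrm{diag}(\sqrt{1-\tau_r},1)$, $M_1=\mathrm{diag}(\sqrt{\tau_r},0)$; the pair $XY$ is selected at the first round in which $X$ and $Y$ are exactly the telescopes that have never obtained outcome $M_1$, and then the same interferometric measurement is performed on $XY$. Its relevant POVM elements are $E^{\pm}_{XY}=\frac{\gamma_D}{2}|\delta_\pm\rangle\langle\delta_\pm|_{XY}\otimes|0\cdots0\rangle\langle0\cdots0|_{\overline{XY}}$, where, with $x_0=1$ and $x_r=\prod_{j=1}^r(1-\tau_j)$, $\gamma_D=\sum_{r=1}^D x_r\left[(1-x_r)^{M-2}-(1-x_{r-1})^{M-2}\right]$; $F^{qr}_{XY}$ is the Fisher information matrix for $(a_{XY},b_{XY})$ from these two outcomes. Both Fisher informations are per distributed entangled (terrestrial) photon. *)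

theory Defs
  imports "HOL-Analysis.Analysis"
begin

(* M telescopes, indexed 0..M-1.  A computational basis state of the M qubits
   is the set S of telescopes holding one photon (S \<subseteq> {..<M}).
   Operators are matrices indexed by such sets. *)

type_synonym op = "nat set \<Rightarrow> nat set \<Rightarrow> complex"
type_synonym ket = "nat set \<Rightarrow> complex"

definition basis :: "nat \<Rightarrow> nat set set" where
  "basis M = Pow {..<M}"

definition op_mult :: "nat \<Rightarrow> op \<Rightarrow> op \<Rightarrow> op" where
  "op_mult M A B = (\<lambda>S T. \<Sum>U\<in>basis M. A S U * B U T)"

definition op_trace :: "nat \<Rightarrow> op \<Rightarrow> complex" where
  "op_trace M A = (\<Sum>S\<in>basis M. A S S)"

definition is_density :: "nat \<Rightarrow> op \<Rightarrow> bool" where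
  "is_density M A \<longleftrightarrow>
     (\<forall>S\<in>basis M. \<forall>T\<in>basis M. A T S = cnj (A S T)) \<and>
     (\<forall>v :: ket. 0 \<le> Re (\<Sum>S\<in>basis M. \<Sum>T\<in>basis M. cnj (v S) * A S T * v T)) \<and>
     op_trace M A = 1"

definition rho1_entry :: "nat \<Rightarrow> (nat \<Rightarrow> nat \<Rightarrow> complex) \<Rightarrow> nat \<Rightarrow> nat \<Rightarrow> complex" where
  "rho1_entry M g j k =
     (if j = k then 1 / of_nat M
      else if j < k then g j k / of_nat M
      else cnj (g k j) / of_nat M)"

definition stellar_state :: "nat \<Rightarrow> real \<Rightarrow> (nat \<Rightarrow> nat \<Rightarrow> complex) \<Rightarrow> op" where
  "stellar_state M \<epsilon> g = (\<lambda>S T.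
     (if S = {} \<and> T = {} then complex_of_real (1 - \<epsilon>) else 0) +
     (if (\<exists>j k. S = {j} \<and> T = {k})
      then complex_of_real \<epsilon> * rho1_entry M g (THE j. S = {j}) (THE k. T = {k})
      else 0))"

definition param_state :: "nat \<Rightarrow> real \<Rightarrow> (nat \<Rightarrow> nat \<Rightarrow> complex) \<Rightarrow> nat \<Rightarrow> nat \<Rightarrow> real^2 \<Rightarrow> op" where
  "param_state M \<epsilon> g X Y c =
     stellar_state M \<epsilon> (\<lambda>j k. if j = X \<and> k = Y then Complex (c$1) (c$2) else g j k)"

(* |delta_\<pm>>_XY = (|01> \<pm> e^{i delta}|10>)/sqrt 2 on the pair X,Y
   (|01>_XY: no photon at X, one photon at Y); pm = True for +, False for - *)
definition ket_delta :: "nat \<Rightarrow> nat \<Rightarrow> real \<Rightarrow> bool \<Rightarrow> ket" where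
  "ket_delta X Y \<delta> pm = (\<lambda>S.
     if S = {Y} then complex_of_real (1 / sqrt 2)
     else if S = {X} then (if pm then 1 else -1) * cis \<delta> / complex_of_real (sqrt 2)
     else 0)"

definition proj :: "ket \<Rightarrow> op" where
  "proj v = (\<lambda>S T. v S * cnj (v T))"

(* A_XY \<otimes> B_(rest) *)
definition tensor_pair :: "nat \<Rightarrow> nat \<Rightarrow> op \<Rightarrow> op \<Rightarrow> op" where
  "tensor_pair X Y A B = (\<lambda>S T.
     A (S \<inter> {X, Y}) (T \<inter> {X, Y}) * B (S - {X, Y}) (T - {X, Y}))"

definition id_op :: op where
  "id_op = (\<lambda>S T. if S = T then 1 else 0)"

definition vac_proj :: op where
  "vac_proj = (\<lambda>S T. if S = {} \<and> T = {} then 1 else 0)"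

definition E_cr :: "nat \<Rightarrow> nat \<Rightarrow> nat \<Rightarrow> real \<Rightarrow> bool \<Rightarrow> op" where
  "E_cr M X Y \<delta> pm = (\<lambda>S T.
     complex_of_real (1 / (2 * real (M choose 2))) *
     tensor_pair X Y (proj (ket_delta X Y \<delta> pm)) id_op S T)"

definition xr :: "(nat \<Rightarrow> real) \<Rightarrow> nat \<Rightarrow> real" where
  "xr \<tau> r = (\<Prod>j = 1..r. 1 - \<tau> j)"

definition gammaD :: "nat \<Rightarrow> nat \<Rightarrow> (nat \<Rightarrow> real) \<Rightarrow> real" where
  "gammaD M D \<tau> =
     (\<Sum>r = 1..D. xr \<tau> r * ((1 - xr \<tau> r) ^ (M - 2) - (1 - xr \<tau> (r - 1)) ^ (M - 2)))"

definition E_qr :: "nat \<Rightarrow> nat \<Rightarrow> nat \<Rightarrow> real \<Rightarrow> bool \<Rightarrow> nat \<Rightarrow> (nat \<Rightarrow> real) \<Rightarrow> op" where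
  "E_qr M X Y \<delta> pm D \<tau> = (\<lambda>S T.
     complex_of_real (gammaD M D \<tau> / 2) *
     tensor_pair X Y (proj (ket_delta X Y \<delta> pm)) vac_proj S T)"

definition outcome_prob :: "nat \<Rightarrow> op \<Rightarrow> op \<Rightarrow> real" where
  "outcome_prob M E \<rho> = Re (op_trace M (op_mult M E \<rho>))"

definition partial :: "(real^2 \<Rightarrow> real) \<Rightarrow> real^2 \<Rightarrow> 2 \<Rightarrow> real" where
  "partial f c i = deriv (\<lambda>t. f (\<chi> k. if k = i then t else c $ k)) (c $ i)"

definition fisher :: "'x set \<Rightarrow> ('x \<Rightarrow> real^2 \<Rightarrow> real) \<Rightarrow> real^2 \<Rightarrow> real^2^2" where
  "fisher Outs p c = (\<chi> i j. \<Sum>x\<in>Outs. (1 / p x c) * partial (p x) c i * partial (p x) c j)"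

definition F_cr :: "nat \<Rightarrow> real \<Rightarrow> (nat \<Rightarrow> nat \<Rightarrow> complex) \<Rightarrow> nat \<Rightarrow> nat \<Rightarrow> real \<Rightarrow> real^2 \<Rightarrow> real^2^2" where
  "F_cr M \<epsilon> g X Y \<delta> c =
     fisher (UNIV :: bool set)
       (\<lambda>pm c'. outcome_prob M (E_cr M X Y \<delta> pm) (param_state M \<epsilon> g X Y c')) c"

definition F_qr :: "nat \<Rightarrow> real \<Rightarrow> (nat \<Rightarrow> nat \<Rightarrow> complex) \<Rightarrow> nat \<Rightarrow> nat \<Rightarrow> real \<Rightarrow> nat \<Rightarrow> (nat \<Rightarrow> real) \<Rightarrow> real^2 \<Rightarrow> real^2^2" where
  "F_qr M \<epsilon> g X Y \<delta> D \<tau> c =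
     fisher (UNIV :: bool set)
       (\<lambda>pm c'. outcome_prob M (E_qr M X Y \<delta> pm D \<tau>) (param_state M \<epsilon> g X Y c')) c"

definition strengths :: "nat \<Rightarrow> (nat \<Rightarrow> real) set" where
  "strengths D = {\<tau>. \<forall>j\<in>{1..D}. 0 \<le> \<tau> j \<and> \<tau> j \<le> 1}"

definition gamma_opt :: "nat \<Rightarrow> nat \<Rightarrow> real" where
  "gamma_opt M D = (SUP \<tau>\<in>strengths D. gammaD M D \<tau>)"

end

theory Submission
  imports Defs
begin

(* Both schemes measure the same projector onto |delta+-> on the pair XY; the remaining
   telescopes only enter through their vacuum amplitude, since rho lives in the zero- and
   one-photon sectors, so the identity and the vacuum projector there act alike.  Hence both
   outcome families have the form p+-(c) = A (1 +- <c, (cos delta, sin delta)>), with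
   prefactor A = eps / (2 M binom(M,2)) resp. A = eps gamma_D / (2 M), and the Fisher matrix of
   such a family is A times a matrix independent of A.

   In the variable y = 1 - x_r, gamma_D is a right-endpoint Riemann-Stieltjes sum of the
   decreasing integrand 1 - y against d(y^(M-2)), so it is at most the integral
   1/(M-1) over [0,1]; for the strengths tau_j = 1/(D-j+1) the points x_r = (D-r)/D are
   equally spaced and the sum is off by at most the mesh 1/D. *)

definition phase_vec :: "real \<Rightarrow> real^2" where
  "phase_vec \<delta> = vector [cos \<delta>, sin \<delta>]"

lemma inner_phase_vec: "c \<bullet> phase_vec \<delta> = c$1 * cos \<delta> + c$2 * sin \<delta>"
  by (simp add: phase_vec_def inner_vec_def sum_2)

lemma partial_affine_inner:
  fixes a b :: real and u :: "real^2"
  shows "partial (\<lambda>c'. a + b * (c' \<bullet> u)) c i = b * u $ i"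
proof -
  have "(\<chi> k. if k = i then t else c $ k) = c + (t - c $ i) *\<^sub>R axis i 1" for t
    by (simp add: vec_eq_iff axis_def)
  then have "partial (\<lambda>c'. a + b * (c' \<bullet> u)) c i
      = deriv (\<lambda>t. a + b * (c \<bullet> u + (t - c $ i) * u $ i)) (c $ i)"
    by (simp add: partial_def inner_add_left inner_axis')
  also have "\<dots> = b * u $ i"
    by (rule DERIV_imp_deriv) (auto intro!: derivative_eq_intros)
  finally show ?thesis .
qed

(* No hypothesis on A or c is needed: with x / 0 = 0 both sides degenerate alike. *)
lemma fisher_binary_affine:
  fixes A :: real and u :: "real^2"
  shows "fisher (UNIV :: bool set) (\<lambda>pm c'. A * (1 + (if pm then 1 else -1) * (c' \<bullet> u))) c
    = (A * (1 / (1 + c \<bullet> u) + 1 / (1 - c \<bullet> u))) *\<^sub>R (\<chi> i j. u $ i * u $ j)"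
proof -
  define p where "p pm c' = A * (1 + (if pm then 1 else -1) * (c' \<bullet> u))" for pm c'
  have "p pm = (\<lambda>c'. A + (if pm then A else - A) * (c' \<bullet> u))" for pm
    by (simp add: p_def fun_eq_iff algebra_simps)
  then have "partial (p pm) c i = (if pm then A else - A) * u $ i" for pm i
    by (simp add: partial_affine_inner)
  moreover have "p pm c = A * (1 + (if pm then 1 else -1) * (c \<bullet> u))" for pm
    by (simp add: p_def)
  moreover have "1 / (A * z) * (a * x) * (a * y) = A * x * y / z"
    if "a = A \<or> a = - A" for a x y z :: real
    using that by (cases "A = 0"; cases "z = 0") (auto simp: field_simps)
  ultimately have "fisher UNIV p c
      = (\<chi> i j. A * u $ i * u $ j / (1 - c \<bullet> u) + A * u $ i * u $ j / (1 + c \<bullet> u))"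
    by (simp add: fisher_def UNIV_bool)
  then show ?thesis
    by (simp add: p_def [abs_def] vec_eq_iff algebra_simps add_divide_distrib)
qed

lemma param_state_support:
  "param_state M \<epsilon> g X Y c S T \<noteq> 0 \<Longrightarrow> (S = {} \<and> T = {}) \<or> (\<exists>j k. S = {j} \<and> T = {k})"
  unfolding param_state_def stellar_state_def by (auto split: if_splits)

lemma ket_delta_restrict_eq_0:
  assumes "Z = {} \<or> (\<exists>k. Z = {k})" "Z \<notin> {{X}, {Y}}"
  shows "ket_delta X Y \<delta> pm (Z \<inter> {X, Y}) = 0"
proof -
  have "Z \<inter> {X, Y} = {}"
    using assms by blast
  then show ?thesis
    by (simp add: ket_delta_def)
qed

lemma pair_term_eq_0:
  assumes "S \<notin> {{X}, {Y}} \<or> U \<notin> {{X}, {Y}}"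
  shows "tensor_pair X Y (proj (ket_delta X Y \<delta> pm)) B S U * param_state M \<epsilon> g X Y c U S = 0"
proof (cases "param_state M \<epsilon> g X Y c U S = 0")
  case False
  then have "S = {} \<or> (\<exists>k. S = {k})" "U = {} \<or> (\<exists>k. U = {k})"
    using param_state_support by blast+
  then have "ket_delta X Y \<delta> pm (S \<inter> {X, Y}) = 0 \<or> ket_delta X Y \<delta> pm (U \<inter> {X, Y}) = 0"
    using assms ket_delta_restrict_eq_0[of S X Y \<delta> pm] ket_delta_restrict_eq_0[of U X Y \<delta> pm] by blast
  then show ?thesis
    by (auto simp: tensor_pair_def proj_def)
qed simp

lemma outcome_prob_pair_projection:
  assumes "X < Y" "Y < M" "B {} {} = 1"
  shows "outcome_prob M (\<lambda>S T. of_real w * tensor_pair X Y (proj (ket_delta X Y \<delta> pm)) B S T)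
      (param_state M \<epsilon> g X Y c)
    = w * (\<epsilon> / real M) * (1 + (if pm then 1 else -1) * (c \<bullet> phase_vec \<delta>))"
proof -
  define t where "t S U = tensor_pair X Y (proj (ket_delta X Y \<delta> pm)) B S U * param_state M \<epsilon> g X Y c U S"
    for S U
  define P where "P = {{X}, {Y}}"
  have P_basis: "finite (basis M)" "P \<subseteq> basis M"
    using assms(1,2) by (auto simp: P_def basis_def)
  have t0: "t S U = 0" if "S \<notin> P \<or> U \<notin> P" for S U
    using that unfolding t_def P_def by (rule pair_term_eq_0)
  have sum_P: "(\<Sum>S\<in>basis M. \<Sum>U\<in>basis M. t S U) = (\<Sum>S\<in>P. \<Sum>U\<in>P. t S U)"
  proof -
    have "(\<Sum>U\<in>basis M. t S U) = (\<Sum>U\<in>P. t S U)" for S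
      by (rule sum.mono_neutral_right) (use P_basis t0 in blast)+
    then have "(\<Sum>S\<in>basis M. \<Sum>U\<in>basis M. t S U) = (\<Sum>S\<in>basis M. \<Sum>U\<in>P. t S U)"
      by simp
    also have "\<dots> = (\<Sum>S\<in>P. \<Sum>U\<in>P. t S U)"
      by (rule sum.mono_neutral_right) (use P_basis t0 in simp_all)
    finally show ?thesis .
  qed
  have unit_facts: "cis \<delta> * cnj (cis \<delta>) = 1" "complex_of_real (sqrt 2) * complex_of_real (sqrt 2) = 2"
    by (simp_all add: cis_cnj cis_mult flip: of_real_mult)
  have diag: "t {X} {X} = of_real (\<epsilon> / (2 * real M))" "t {Y} {Y} = of_real (\<epsilon> / (2 * real M))"
    using assms by (auto simp: t_def tensor_pair_def proj_def ket_delta_def param_state_def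
        stellar_state_def rho1_entry_def insert_commute unit_facts)
  have off_diag: "t {X} {Y} + t {Y} {X} = of_real ((if pm then 1 else -1) * (\<epsilon> / real M) * (c \<bullet> phase_vec \<delta>))"
    using assms by (auto simp: t_def tensor_pair_def proj_def ket_delta_def param_state_def
        stellar_state_def rho1_entry_def insert_commute complex_eq_iff inner_phase_vec
        field_simps)
  have "op_trace M (op_mult M (\<lambda>S T. of_real w * tensor_pair X Y (proj (ket_delta X Y \<delta> pm)) B S T)
      (param_state M \<epsilon> g X Y c)) = of_real w * (\<Sum>S\<in>basis M. \<Sum>U\<in>basis M. t S U)"
    by (simp add: op_trace_def op_mult_def t_def sum_distrib_left mult.assoc)
  also have "\<dots> = of_real w * (t {X} {X} + t {Y} {Y} + (t {X} {Y} + t {Y} {X}))"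
    using assms(1) by (simp add: sum_P P_def algebra_simps)
  finally show ?thesis
    unfolding outcome_prob_def diag off_diag by (simp add: algebra_simps)
qed

lemma fisher_pair_projection:
  assumes "X < Y" "Y < M" "B {} {} = 1"
  shows "fisher (UNIV :: bool set)
      (\<lambda>pm c'. outcome_prob M (\<lambda>S T. of_real w * tensor_pair X Y (proj (ket_delta X Y \<delta> pm)) B S T)
        (param_state M \<epsilon> g X Y c')) c
    = (w * (\<epsilon> / real M) * (1 / (1 + c \<bullet> phase_vec \<delta>) + 1 / (1 - c \<bullet> phase_vec \<delta>)))
        *\<^sub>R (\<chi> i j. phase_vec \<delta> $ i * phase_vec \<delta> $ j)"
proof -
  have probs: "(\<lambda>pm c'. outcome_prob M (\<lambda>S T. of_real w * tensor_pair X Y (proj (ket_delta X Y \<delta> pm)) B S T)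
        (param_state M \<epsilon> g X Y c'))
      = (\<lambda>pm c'. w * (\<epsilon> / real M) * (1 + (if pm then 1 else -1) * (c' \<bullet> phase_vec \<delta>)))"
    using assms by (simp add: outcome_prob_pair_projection)
  show ?thesis
    unfolding probs by (rule fisher_binary_affine)
qed

lemma F_cr_eq:
  assumes "X < Y" "Y < M"
  shows "F_cr M \<epsilon> g X Y \<delta> c
    = (1 / (2 * real (M choose 2)) * (\<epsilon> / real M)
        * (1 / (1 + c \<bullet> phase_vec \<delta>) + 1 / (1 - c \<bullet> phase_vec \<delta>)))
        *\<^sub>R (\<chi> i j. phase_vec \<delta> $ i * phase_vec \<delta> $ j)"
  unfolding F_cr_def E_cr_def using assms by (rule fisher_pair_projection) (simp add: id_op_def)

lemma F_qr_eq:
  assumes "X < Y" "Y < M"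
  shows "F_qr M \<epsilon> g X Y \<delta> D \<tau> c
    = (gammaD M D \<tau> / 2 * (\<epsilon> / real M)
        * (1 / (1 + c \<bullet> phase_vec \<delta>) + 1 / (1 - c \<bullet> phase_vec \<delta>)))
        *\<^sub>R (\<chi> i j. phase_vec \<delta> $ i * phase_vec \<delta> $ j)"
  unfolding F_qr_def E_qr_def using assms by (rule fisher_pair_projection) (simp add: vac_proj_def)

lemma F_qr_eq_scaleR_F_cr:
  assumes "M \<ge> 2" "X < Y" "Y < M"
  shows "F_qr M \<epsilon> g X Y \<delta> D \<tau> c = (real (M choose 2) * gammaD M D \<tau>) *\<^sub>R F_cr M \<epsilon> g X Y \<delta> c"
proof -
  have "real (M choose 2) \<noteq> 0"
    using assms(1) by simp
  then show ?thesis
    using assms(2,3) by (simp add: F_qr_eq F_cr_eq)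
qed

lemma F_cr_neq_0:
  assumes "M \<ge> 2" "0 < \<epsilon>" "X < Y" "Y < M" "\<bar>c \<bullet> phase_vec \<delta>\<bar> < 1"
  shows "F_cr M \<epsilon> g X Y \<delta> c \<noteq> 0"
proof -
  define k where "k = 1 / (2 * real (M choose 2)) * (\<epsilon> / real M)
      * (1 / (1 + c \<bullet> phase_vec \<delta>) + 1 / (1 - c \<bullet> phase_vec \<delta>))"
  have "0 < k"
    using assms by (simp add: k_def add_pos_pos)
  moreover have "F_cr M \<epsilon> g X Y \<delta> c $ 1 $ 1 + F_cr M \<epsilon> g X Y \<delta> c $ 2 $ 2 = k"
    unfolding F_cr_eq[OF assms(3,4)] k_def[symmetric]
    by (simp add: phase_vec_def flip: distrib_left power2_eq_square)
  ultimately show ?thesis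
    by auto
qed

(* Phi n y = integral of (1 - t) d(t^n) over [0, y] *)
definition Phi :: "nat \<Rightarrow> real \<Rightarrow> real" where
  "Phi n y = y ^ n - real n / (real n + 1) * y ^ (n + 1)"

lemma Phi_diff_ge:
  fixes a b :: real
  assumes "0 \<le> a" "a \<le> b"
  shows "(1 - b) * (b ^ n - a ^ n) \<le> Phi n b - Phi n a"
proof -
  define f where "f t = Phi n t - Phi n a - (1 - t) * (t ^ n - a ^ n)" for t
  have "f a \<le> f b"
  proof (rule DERIV_nonneg_imp_nondecreasing[OF assms(2)])
    fix t assume "a \<le> t" "t \<le> b"
    have "DERIV f t :> t ^ n - a ^ n"
      unfolding f_def Phi_def by (rule derivative_eq_intros refl)+ (cases n; simp add: field_simps)
    moreover have "a ^ n \<le> t ^ n" using \<open>a \<le> t\<close> assms(1) by (simp add: power_mono)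
    ultimately show "\<exists>y. DERIV f t :> y \<and> 0 \<le> y" by auto
  qed
  then show ?thesis by (simp add: f_def)
qed

lemma Phi_diff_le:
  fixes a b :: real
  assumes "0 \<le> a" "a \<le> b"
  shows "Phi n b - Phi n a \<le> (1 - a) * (b ^ n - a ^ n)"
proof -
  define f where "f t = (1 - a) * (t ^ n - a ^ n) - (Phi n t - Phi n a)" for t
  have "f a \<le> f b"
  proof (rule DERIV_nonneg_imp_nondecreasing[OF assms(2)])
    fix t assume "a \<le> t" "t \<le> b"
    have "DERIV f t :> real n * t ^ (n - 1) * (t - a)"
      unfolding f_def Phi_def by (rule derivative_eq_intros refl)+ (cases n; simp add: field_simps)
    moreover have "0 \<le> real n * t ^ (n - 1) * (t - a)" using \<open>a \<le> t\<close> assms(1) by simp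
    ultimately show "\<exists>y. DERIV f t :> y \<and> 0 \<le> y" by auto
  qed
  then show ?thesis by (simp add: f_def)
qed

lemma Phi_0: "n \<ge> 1 \<Longrightarrow> Phi n 0 = 0"
  by (simp add: Phi_def)

lemma Phi_1: "Phi n 1 = 1 / (real n + 1)"
  by (simp add: Phi_def field_simps)

lemma xr_0 [simp]: "xr \<tau> 0 = 1"
  by (simp add: xr_def)

lemma xr_Suc: "xr \<tau> (Suc r) = xr \<tau> r * (1 - \<tau> (Suc r))"
  by (simp add: xr_def prod.nat_ivl_Suc')

lemma xr_bounds:
  assumes "\<tau> \<in> strengths D" "r \<le> D"
  shows "0 \<le> xr \<tau> r" "xr \<tau> r \<le> 1"
  using assms by (auto simp: xr_def strengths_def intro!: prod_nonneg prod_le_1)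

lemma xr_Suc_le:
  assumes "\<tau> \<in> strengths D" "Suc r \<le> D"
  shows "xr \<tau> (Suc r) \<le> xr \<tau> r"
  using assms xr_bounds[OF assms(1), of r] unfolding xr_Suc
  by (auto simp: strengths_def intro!: mult_left_le)

lemma gammaD_le:
  assumes "M \<ge> 3" "\<tau> \<in> strengths D"
  shows "gammaD M D \<tau> \<le> 1 / (real M - 1)"
proof -
  define n where "n = M - 2"
  define f where "f r = Phi n (1 - xr \<tau> r)" for r
  have "gammaD M D \<tau> \<le> (\<Sum>r = 1..D. f r - f (r - 1))"
    unfolding gammaD_def n_def[symmetric]
  proof (rule sum_mono)
    fix r assume r: "r \<in> {1..D}"
    then obtain k where k: "r = Suc k" by (cases r) auto
    have "xr \<tau> r \<le> xr \<tau> k" "xr \<tau> k \<le> 1"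
      using r k xr_Suc_le[OF assms(2)] xr_bounds[OF assms(2)] by auto
    then show "xr \<tau> r * ((1 - xr \<tau> r) ^ n - (1 - xr \<tau> (r - 1)) ^ n) \<le> f r - f (r - 1)"
      using Phi_diff_ge[of "1 - xr \<tau> k" "1 - xr \<tau> r" n] by (simp add: f_def k)
  qed
  also have "\<dots> = f D - f 0"
    using sum_telescope''[of 0 D f] by simp
  also have "\<dots> \<le> Phi n 1"
    using Phi_diff_ge[of "1 - xr \<tau> D" 1 n] xr_bounds[OF assms(2), of D] assms(1)
    by (simp add: f_def n_def Phi_0)
  also have "\<dots> = 1 / (real M - 1)"
    using assms(1) by (simp add: Phi_1 n_def of_nat_diff)
  finally show ?thesis .
qed

definition tau_uniform :: "nat \<Rightarrow> nat \<Rightarrow> real" where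
  "tau_uniform D j = 1 / real (D - j + 1)"

lemma tau_uniform_strengths: "tau_uniform D \<in> strengths D"
  by (auto simp: strengths_def tau_uniform_def)

lemma xr_tau_uniform:
  assumes "r \<le> D"
  shows "xr (tau_uniform D) r = 1 - real r / real D"
  using assms
proof (induction r)
  case 0
  then show ?case by simp
next
  case (Suc r)
  have "tau_uniform D (Suc r) = 1 / (real D - real r)"
    using Suc.prems by (simp add: tau_uniform_def of_nat_diff)
  then have "xr (tau_uniform D) (Suc r) = (1 - real r / real D) * (1 - 1 / (real D - real r))"
    using Suc by (simp add: xr_Suc)
  also have "\<dots> = 1 - real (Suc r) / real D"
    using Suc.prems by (simp add: field_simps)
  finally show ?case .
qed

lemma gammaD_tau_uniform_ge:
  assumes "M \<ge> 3" "D \<ge> 1"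
  shows "1 / (real M - 1) - 1 / real D \<le> gammaD M D (tau_uniform D)"
proof -
  define n where "n = M - 2"
  define y where "y r = real r / real D" for r
  define f where "f r = Phi n (y r) - y r ^ n / real D" for r
  have "1 / (real M - 1) - 1 / real D = f D - f 0"
    using assms by (simp add: f_def y_def n_def Phi_0 Phi_1 of_nat_diff)
  also have "\<dots> = (\<Sum>r = 1..D. f r - f (r - 1))"
    using sum_telescope''[of 0 D f] by simp
  also have "\<dots> \<le> gammaD M D (tau_uniform D)"
    unfolding gammaD_def n_def[symmetric]
  proof (rule sum_mono)
    fix r assume r: "r \<in> {1..D}"
    have y_step: "y (r - 1) = y r - 1 / real D"
      using r by (simp add: y_def of_nat_diff diff_divide_distrib)
    have "0 \<le> y (r - 1)" "y (r - 1) \<le> y r"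
      by (simp_all add: y_def divide_right_mono)
    then have "f r - f (r - 1) \<le> (1 - y r) * (y r ^ n - y (r - 1) ^ n)"
      using Phi_diff_le[of "y (r - 1)" "y r" n] unfolding f_def y_step
      by (simp add: algebra_simps)
    moreover have "xr (tau_uniform D) r = 1 - y r" "xr (tau_uniform D) (r - 1) = 1 - y (r - 1)"
      using r xr_tau_uniform[of r D] xr_tau_uniform[of "r - 1" D] by (auto simp: y_def)
    ultimately show "f r - f (r - 1) \<le> xr (tau_uniform D) r *
        ((1 - xr (tau_uniform D) r) ^ n - (1 - xr (tau_uniform D) (r - 1)) ^ n)"
      by simp
  qed
  finally show ?thesis .
qed

lemma gamma_opt_bounds:
  assumes "M \<ge> 3" "D \<ge> 1"
  shows "1 / (real M - 1) - 1 / real D \<le> gamma_opt M D" "gamma_opt M D \<le> 1 / (real M - 1)"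
proof -
  have "bdd_above (gammaD M D ` strengths D)"
    using gammaD_le[OF assms(1)] by (rule bdd_aboveI2)
  then have "gammaD M D (tau_uniform D) \<le> gamma_opt M D"
    unfolding gamma_opt_def by (rule cSUP_upper[OF tau_uniform_strengths])
  then show "1 / (real M - 1) - 1 / real D \<le> gamma_opt M D"
    using gammaD_tau_uniform_ge[OF assms] by linarith
  show "gamma_opt M D \<le> 1 / (real M - 1)"
    unfolding gamma_opt_def using tau_uniform_strengths gammaD_le[OF assms(1)]
    by (auto intro!: cSUP_least)
qed

lemma gamma_opt_tendsto:
  assumes "M \<ge> 3"
  shows "gamma_opt M \<longlonglongrightarrow> 1 / (real M - 1)"
proof (rule real_tendsto_sandwich)
  show "\<forall>\<^sub>F D in sequentially. 1 / (real M - 1) - 1 / real D \<le> gamma_opt M D"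
    "\<forall>\<^sub>F D in sequentially. gamma_opt M D \<le> 1 / (real M - 1)"
    using gamma_opt_bounds[OF assms] by (auto intro: eventually_sequentiallyI[of 1])
  show "(\<lambda>D. 1 / (real M - 1) - 1 / real D) \<longlonglongrightarrow> 1 / (real M - 1)"
    using tendsto_diff[OF tendsto_const lim_1_over_n] by simp
qed simp

lemma real_choose_two: "real (n choose 2) = real n * (real n - 1) / 2"
  by (induction n) (simp_all add: numeral_2_eq_2 field_simps)

theorem theorem1:
  fixes M :: nat and \<epsilon> :: real and g :: "nat \<Rightarrow> nat \<Rightarrow> complex"
    and X Y :: nat and \<delta> :: real
  assumes "M \<ge> 3" and "0 < \<epsilon>" and "\<epsilon> < 1"
    and "is_density M (stellar_state M \<epsilon> g)"
    and "X < Y" and "Y < M"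
    and "\<bar>Re (g X Y * cis (- \<delta>))\<bar> < 1"
  shows "(\<forall>D \<ge> 1. \<forall>\<tau> \<in> strengths D. gammaD M D \<tau> > 0 \<longrightarrow>
            (let c0 = vector [Re (g X Y), Im (g X Y)] :: real^2;
                 Fq = F_qr M \<epsilon> g X Y \<delta> D \<tau> c0;
                 Fc = F_cr M \<epsilon> g X Y \<delta> c0
             in Fq = (real (M choose 2) * gammaD M D \<tau>) *\<^sub>R Fc \<and>
                norm Fq / norm Fc = real (M choose 2) * gammaD M D \<tau>))
       \<and> (gamma_opt M \<longlonglongrightarrow> 1 / (real M - 1))
       \<and> ((\<lambda>D. real (M choose 2) * gamma_opt M D) \<longlonglongrightarrow> real M / 2)"
proof (intro conjI allI impI ballI)
  fix D :: nat and \<tau> assume "gammaD M D \<tau> > 0"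
  define c0 where "c0 = (vector [Re (g X Y), Im (g X Y)] :: real^2)"
  have "c0 \<bullet> phase_vec \<delta> = Re (g X Y * cis (- \<delta>))"
    by (simp add: c0_def inner_phase_vec)
  then have "F_cr M \<epsilon> g X Y \<delta> c0 \<noteq> 0"
    using assms F_cr_neq_0 by simp
  moreover have "real (M choose 2) * gammaD M D \<tau> > 0"
    using assms(1) \<open>gammaD M D \<tau> > 0\<close> by simp
  ultimately show "let c0 = vector [Re (g X Y), Im (g X Y)] :: real^2;
                 Fq = F_qr M \<epsilon> g X Y \<delta> D \<tau> c0;
                 Fc = F_cr M \<epsilon> g X Y \<delta> c0
             in Fq = (real (M choose 2) * gammaD M D \<tau>) *\<^sub>R Fc \<and>
                norm Fq / norm Fc = real (M choose 2) * gammaD M D \<tau>"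
    using F_qr_eq_scaleR_F_cr[of M X Y] assms by (simp add: c0_def[symmetric] Let_def)
next
  show lim: "gamma_opt M \<longlonglongrightarrow> 1 / (real M - 1)"
    using assms(1) by (rule gamma_opt_tendsto)
  have "real M - 1 \<noteq> 0"
    using assms(1) by simp
  then have "real (M choose 2) * (1 / (real M - 1)) = real M / 2"
    by (simp add: real_choose_two field_simps)
  then show "(\<lambda>D. real (M choose 2) * gamma_opt M D) \<longlonglongrightarrow> real M / 2"
    using tendsto_mult_left[OF lim, of "real (M choose 2)"] by (simp only:)
qed

end
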